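(* Let $e,d,t$ be positive integers with $\gcd(e,d)=1$. Suppose $S=\langle e,e+d,e+2d,\dots,e+td\rangle$ is a numerical semigroup whose minimal generating set is $\{e,e+d,\dots,e+td\}$. Then ${\rm d}_{\max}(S)$ equals the number of integer partitions of $e-1$ into parts from $\{1,2,\dots,t\}$.
   Context: A numerical semigroup is a submonoid of $(\mathbb N,+)$ with finite complement. For $S$ with minimal generators $a_0<a_1<\dots<a_t$, an $S$-factorization of $n\in S$ is $(c_0,\dots,c_t)\in\mathbb N^{t+1}$ with $\sum c_ia_i=n$, of length $\sum c_i$. ${\rm ord}(n;S)$ is the maximal length, ${\rm d}_{\max}(n;S)$ is the number of $S$-factorizations of $n$ of length ${\rm ord}(n;S)$, and ${\rm d}_{\max}(S)=\max_{n\in S}{\rm d}_{\max}(n;S)$. *)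

theory Defs
  imports Main
begin

definition numerical_semigroup :: "nat set \<Rightarrow> bool" where
  "numerical_semigroup S \<longleftrightarrow> 0 \<in> S \<and> (\<forall>x\<in>S. \<forall>y\<in>S. x + y \<in> S) \<and> finite (UNIV - S)"

definition monoid_gen :: "nat set \<Rightarrow> nat set" where
  "monoid_gen A = {n. \<exists>c :: nat \<Rightarrow> nat. n = (\<Sum>a\<in>A. c a * a)}"

definition minimal_generators :: "nat set \<Rightarrow> nat set" where
  "minimal_generators S = {x \<in> S. x \<noteq> 0 \<and>
     \<not> (\<exists>a\<in>S. \<exists>b\<in>S. a \<noteq> 0 \<and> b \<noteq> 0 \<and> x = a + b)}"

definition gens :: "nat set \<Rightarrow> nat list" where
  "gens S = sorted_list_of_set (minimal_generators S)"

definition factorizations :: "nat \<Rightarrow> nat set \<Rightarrow> nat list set" where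
  "factorizations n S = {c. length c = length (gens S) \<and>
      (\<Sum>i<length (gens S). c ! i * gens S ! i) = n}"

definition fact_len :: "nat list \<Rightarrow> nat" where
  "fact_len c = sum_list c"

definition ord_S :: "nat \<Rightarrow> nat set \<Rightarrow> nat" where
  "ord_S n S = Max (fact_len ` factorizations n S)"

definition dmax_elem :: "nat \<Rightarrow> nat set \<Rightarrow> nat" where
  "dmax_elem n S = card {c \<in> factorizations n S. fact_len c = ord_S n S}"

definition dmax :: "nat set \<Rightarrow> nat" where
  "dmax S = Max {dmax_elem n S | n. n \<in> S}"

definition num_partitions_bounded :: "nat \<Rightarrow> nat \<Rightarrow> nat" where
  "num_partitions_bounded m t = card {mu :: nat \<Rightarrow> nat.
      (\<forall>i. mu i \<noteq> 0 \<longrightarrow> i \<in> {1..t}) \<and> (\<Sum>i\<in>{1..t}. i * mu i) = m}"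

end

theory Submission
  imports Defs
begin

text \<open>A factorization of n with respect to e, e + d, ..., e + t d is a list c of t + 1
  multiplicities with n = e |c| + d w(c), where |c| = \<Sum> c_i is its length and
  w(c) = \<Sum> i c_i its weight.
  Among factorizations of maximal length the weight is fixed and below e: otherwise trading
  weight e for d more copies of the generators gives a longer factorization.
  Such lists of length L and weight k correspond to partitions of k into parts in {1..t}
  with at most L parts (the part i occurring c_i times, the zero entry padding the list),
  and adding e - 1 - k parts 1 embeds those into the partitions of e - 1. For
  n = (e - 1)(e + d) coprimality forces length e - 1 and weight e - 1, so all partitions of
  e - 1 occur.\<close>

definition list_weight :: "nat list \<Rightarrow> nat" where
  "list_weight c = (\<Sum>i<length c. i * c ! i)"

definition bounded_partitions :: "nat \<Rightarrow> nat \<Rightarrow> (nat \<Rightarrow> nat) set" where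
  "bounded_partitions t m = {mu. (\<forall>i. mu i \<noteq> 0 \<longrightarrow> i \<in> {1..t}) \<and> (\<Sum>i\<in>{1..t}. i * mu i) = m}"

definition arith_factorizations :: "nat \<Rightarrow> nat \<Rightarrow> nat \<Rightarrow> nat \<Rightarrow> nat list set" where
  "arith_factorizations e d t n =
     {c. length c = Suc t \<and> e * sum_list c + d * list_weight c = n}"

subsection \<open>Length and weight of lists\<close>

lemma lessThan_Suc_eq_insert_0_atLeastAtMost: "{..<Suc t} = insert 0 {1..t}"
  by auto

lemma sum_list_eq_nth_0_plus:
  "length c = Suc t \<Longrightarrow> sum_list c = c ! 0 + (\<Sum>i\<in>{1..t}. c ! i)"
  by (simp add: sum_list_sum_nth atLeast0LessThan lessThan_Suc_eq_insert_0_atLeastAtMost)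

lemma list_weight_eq_sum_atLeastAtMost:
  "length c = Suc t \<Longrightarrow> list_weight c = (\<Sum>i\<in>{1..t}. i * c ! i)"
  by (simp add: list_weight_def lessThan_Suc_eq_insert_0_atLeastAtMost)

lemma sum_arith_progression_combination:
  assumes "length c = Suc t"
  shows "(\<Sum>i<Suc t. c ! i * (e + i * d)) = e * sum_list c + d * list_weight c"
proof -
  have "(\<Sum>i<Suc t. c ! i * (e + i * d)) = (\<Sum>i<Suc t. e * c ! i + d * (i * c ! i))"
    by (simp add: algebra_simps)
  also have "\<dots> = e * (\<Sum>i<Suc t. c ! i) + d * (\<Sum>i<Suc t. i * c ! i)"
    by (simp add: sum.distrib sum_distrib_left del: sum.lessThan_Suc)
  finally show ?thesis
    using assms by (simp add: list_weight_def sum_list_sum_nth atLeast0LessThan)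
qed

lemma list_weight_le: "list_weight c \<le> (length c - 1) * sum_list c"
proof -
  have "list_weight c \<le> (\<Sum>i<length c. (length c - 1) * c ! i)"
    unfolding list_weight_def by (rule sum_mono) auto
  also have "\<dots> = (length c - 1) * sum_list c"
    by (simp add: sum_list_sum_nth atLeast0LessThan sum_distrib_left)
  finally show ?thesis .
qed

lemma exists_list_with_sum_and_weight:
  "s \<le> t * N \<Longrightarrow> \<exists>c. length c = Suc t \<and> sum_list c = N \<and> list_weight c = s"
proof (induction N arbitrary: s)
  case 0
  then show ?case
    by (intro exI[of _ "replicate (Suc t) 0"])
      (auto simp: list_weight_def simp del: replicate_Suc)
next
  case (Suc N)
  define j where "j = min s t"
  have "s - j \<le> t * N"
    using Suc.prems by (auto simp: j_def)
  then obtain c where c: "length c = Suc t" "sum_list c = N" "list_weight c = s - j"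
    using Suc.IH by blast
  define c' where "c' = c[j := c ! j + 1]"
  have j: "j < Suc t"
    by (simp add: j_def)
  have "list_weight c' = (\<Sum>i<Suc t. i * c ! i + (if i = j then j else 0))"
    using c(1) j by (auto simp: list_weight_def c'_def nth_list_update intro!: sum.cong)
  also have "\<dots> = list_weight c + j"
    using c(1) j by (simp add: sum.distrib list_weight_def)
  finally have "list_weight c' = s"
    using c(3) by (simp add: j_def)
  moreover have "sum_list c' = Suc N"
    using c j by (simp add: c'_def sum_list_update)
  ultimately show ?case
    using c(1) by (intro exI[of _ c']) (simp add: c'_def)
qed

subsection \<open>Partitions with bounded parts\<close>

lemma finite_bounded_partitions: "finite (bounded_partitions t m)"
proof (rule finite_subset)
  let ?of_list = "\<lambda>l :: nat list. \<lambda>i. if i \<in> {1..t} then l ! i else 0"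
  let ?lists = "{l. set l \<subseteq> {0..m} \<and> length l = Suc t}"
  show "bounded_partitions t m \<subseteq> ?of_list ` ?lists"
  proof
    fix mu assume "mu \<in> bounded_partitions t m"
    then have supp: "\<forall>i. mu i \<noteq> 0 \<longrightarrow> i \<in> {1..t}" and sum: "(\<Sum>i\<in>{1..t}. i * mu i) = m"
      by (auto simp: bounded_partitions_def)
    have "mu i \<le> m" for i
    proof (cases "i \<in> {1..t}")
      case True
      have "mu i \<le> i * mu i"
        using True by simp
      also have "\<dots> \<le> (\<Sum>i\<in>{1..t}. i * mu i)"
        by (rule member_le_sum) (use True in auto)
      finally show ?thesis
        using sum by simp
    next
      case False
      then show ?thesis
        using supp by (metis le0)
    qed
    then have "map mu [0..<Suc t] \<in> ?lists"
      by auto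
    moreover have "mu = ?of_list (map mu [0..<Suc t])"
      using supp by (auto simp: fun_eq_iff simp del: upt_Suc)
    ultimately show "mu \<in> ?of_list ` ?lists"
      by blast
  qed
  show "finite (?of_list ` ?lists)"
    by (intro finite_imageI finite_lists_length_eq) auto
qed

lemma bounded_partitions_num_parts_le:
  assumes "mu \<in> bounded_partitions t m"
  shows "(\<Sum>i\<in>{1..t}. mu i) \<le> m"
proof -
  have "(\<Sum>i\<in>{1..t}. mu i) \<le> (\<Sum>i\<in>{1..t}. i * mu i)"
    by (rule sum_mono) auto
  then show ?thesis
    using assms by (simp add: bounded_partitions_def)
qed

lemma card_bounded_partitions_mono:
  assumes "t > 0" and "m \<le> m'"
  shows "card (bounded_partitions t m) \<le> card (bounded_partitions t m')"
proof (rule card_inj_on_le[OF _ _ finite_bounded_partitions])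
  let ?add_ones = "\<lambda>mu. mu(1 := mu 1 + (m' - m))"
  show "inj_on ?add_ones (bounded_partitions t m)"
  proof (rule inj_onI)
    fix mu nu assume "?add_ones mu = ?add_ones nu"
    then have "mu i = nu i" for i
      by (cases "i = 1") (auto dest: fun_cong[where x = i])
    then show "mu = nu" ..
  qed
  show "?add_ones ` bounded_partitions t m \<subseteq> bounded_partitions t m'"
  proof
    fix nu assume "nu \<in> ?add_ones ` bounded_partitions t m"
    then obtain mu where mu: "mu \<in> bounded_partitions t m" and nu: "nu = ?add_ones mu"
      by blast
    have "(\<Sum>i\<in>{1..t}. i * nu i) = (\<Sum>i\<in>{1..t}. i * mu i + (if i = 1 then m' - m else 0))"
      by (rule sum.cong) (auto simp: nu)
    also have "\<dots> = m'"
      using mu assms by (simp add: sum.distrib bounded_partitions_def)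
    finally show "nu \<in> bounded_partitions t m'"
      using mu assms(1) by (auto simp: nu bounded_partitions_def)
  qed
qed

lemma card_lists_with_sum_and_weight:
  "card {c. length c = Suc t \<and> sum_list c = N \<and> list_weight c = k} =
   card {mu \<in> bounded_partitions t k. (\<Sum>i\<in>{1..t}. mu i) \<le> N}"
proof (rule bij_betw_same_card)
  let ?to_partition = "\<lambda>c :: nat list. \<lambda>i. if i \<in> {1..t} then c ! i else 0"
  let ?to_list = "\<lambda>mu. map (\<lambda>i. if i = 0 then N - (\<Sum>j\<in>{1..t}. mu j) else mu i) [0..<Suc t]"
  show "bij_betw ?to_partition {c. length c = Suc t \<and> sum_list c = N \<and> list_weight c = k}
      {mu \<in> bounded_partitions t k. (\<Sum>i\<in>{1..t}. mu i) \<le> N}"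
  proof (rule bij_betw_byWitness[where f' = ?to_list])
    show "\<forall>c\<in>{c. length c = Suc t \<and> sum_list c = N \<and> list_weight c = k}.
        ?to_list (?to_partition c) = c"
      by (auto intro!: nth_equalityI simp: nth_Cons' sum_list_eq_nth_0_plus simp del: upt_Suc)
    show "\<forall>mu\<in>{mu \<in> bounded_partitions t k. (\<Sum>i\<in>{1..t}. mu i) \<le> N}.
        ?to_partition (?to_list mu) = mu"
      by (auto simp: fun_eq_iff bounded_partitions_def simp del: upt_Suc)
    show "?to_partition ` {c. length c = Suc t \<and> sum_list c = N \<and> list_weight c = k}
        \<subseteq> {mu \<in> bounded_partitions t k. (\<Sum>i\<in>{1..t}. mu i) \<le> N}"
    proof clarify
      fix c :: "nat list" assume c: "length c = Suc t" "N = sum_list c" "k = list_weight c"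
      have "(\<Sum>i\<in>{1..t}. i * ?to_partition c i) = list_weight c"
        using c(1) by (simp add: list_weight_eq_sum_atLeastAtMost)
      moreover have "(\<Sum>i\<in>{1..t}. ?to_partition c i) \<le> sum_list c"
        using c(1) by (simp add: sum_list_eq_nth_0_plus)
      ultimately show "?to_partition c \<in> bounded_partitions t (list_weight c) \<and>
          (\<Sum>i\<in>{1..t}. ?to_partition c i) \<le> sum_list c"
        by (simp add: bounded_partitions_def)
    qed
    show "?to_list ` {mu \<in> bounded_partitions t k. (\<Sum>i\<in>{1..t}. mu i) \<le> N}
        \<subseteq> {c. length c = Suc t \<and> sum_list c = N \<and> list_weight c = k}"
    proof clarify
      fix mu assume mu: "mu \<in> bounded_partitions t k" "(\<Sum>i\<in>{1..t}. mu i) \<le> N"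
      let ?c = "?to_list mu"
      have nth: "?c ! i = mu i" if "i \<in> {1..t}" for i
        using that by (simp del: upt_Suc)
      have "sum_list ?c = N"
        using mu(2) by (simp add: sum_list_eq_nth_0_plus nth del: upt_Suc)
      moreover have "list_weight ?c = k"
        using mu(1) by (simp add: list_weight_eq_sum_atLeastAtMost nth bounded_partitions_def
            del: upt_Suc)
      ultimately show "length ?c = Suc t \<and> sum_list ?c = N \<and> list_weight ?c = k"
        by simp
    qed
  qed
qed

subsection \<open>Factorizations of maximal length\<close>

lemma finite_arith_factorizations:
  assumes "e > 0"
  shows "finite (arith_factorizations e d t n)"
proof (rule finite_subset)
  show "arith_factorizations e d t n \<subseteq> {c. set c \<subseteq> {0..n} \<and> length c = Suc t}"
  proof clarify
    fix c assume "c \<in> arith_factorizations e d t n"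
    then have c: "length c = Suc t" "e * sum_list c + d * list_weight c = n"
      by (auto simp: arith_factorizations_def)
    have "sum_list c \<le> e * sum_list c"
      using assms by simp
    then have "x \<le> n" if "x \<in> set c" for x
      using c(2) member_le_sum_list[OF that] by linarith
    then show "set c \<subseteq> {0..n} \<and> length c = Suc t"
      using c(1) by auto
  qed
  show "finite {c. set c \<subseteq> {0..n} \<and> length c = Suc t}"
    by (rule finite_lists_length_eq) auto
qed

lemma max_length_arith_factorization_weight_less:
  assumes "d > 0" and c: "c \<in> arith_factorizations e d t n"
    and max: "\<And>c'. c' \<in> arith_factorizations e d t n \<Longrightarrow> sum_list c' \<le> sum_list c"
  shows "list_weight c < e"
proof (rule ccontr)
  assume "\<not> list_weight c < e"
  then obtain r where r: "list_weight c = e + r"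
    using le_Suc_ex not_less by blast
  have len: "length c = Suc t" and n: "e * sum_list c + d * list_weight c = n"
    using c by (auto simp: arith_factorizations_def)
  have "r \<le> t * (sum_list c + d)"
    using list_weight_le[of c] len r by (simp add: add_mult_distrib2)
  then obtain c' where c': "length c' = Suc t" "sum_list c' = sum_list c + d" "list_weight c' = r"
    using exists_list_with_sum_and_weight by blast
  have "c' \<in> arith_factorizations e d t n"
    using c' n r by (simp add: arith_factorizations_def algebra_simps)
  then show False
    using max c'(2) \<open>d > 0\<close> by fastforce
qed

lemma arith_factorizations_of_length:
  assumes "d > 0" and "c \<in> arith_factorizations e d t n"
  shows "{c' \<in> arith_factorizations e d t n. sum_list c' = sum_list c} =
    {c'. length c' = Suc t \<and> sum_list c' = sum_list c \<and> list_weight c' = list_weight c}"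
  using assms by (auto simp: arith_factorizations_def)

lemma card_max_length_arith_factorizations_le:
  assumes "e > 0" "d > 0" "t > 0" and nonempty: "arith_factorizations e d t n \<noteq> {}"
  shows "card {c \<in> arith_factorizations e d t n.
      sum_list c = Max (sum_list ` arith_factorizations e d t n)}
    \<le> card (bounded_partitions t (e - 1))"
proof -
  let ?F = "arith_factorizations e d t n"
  have fin: "finite ?F"
    using assms(1) by (rule finite_arith_factorizations)
  have "Max (sum_list ` ?F) \<in> sum_list ` ?F"
    using fin nonempty by (intro Max_in) auto
  then obtain c where c: "c \<in> ?F" and L: "sum_list c = Max (sum_list ` ?F)"
    by auto
  have "list_weight c < e"
    using assms(2) c by (rule max_length_arith_factorization_weight_less) (simp add: L fin)
  have "card {c' \<in> ?F. sum_list c' = Max (sum_list ` ?F)} =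
      card {mu \<in> bounded_partitions t (list_weight c). (\<Sum>i\<in>{1..t}. mu i) \<le> sum_list c}"
    unfolding L[symmetric] arith_factorizations_of_length[OF assms(2) c]
    by (rule card_lists_with_sum_and_weight)
  also have "\<dots> \<le> card (bounded_partitions t (list_weight c))"
    by (intro card_mono finite_bounded_partitions) auto
  also have "\<dots> \<le> card (bounded_partitions t (e - 1))"
    using assms(3) \<open>list_weight c < e\<close> by (intro card_bounded_partitions_mono) auto
  finally show ?thesis .
qed

text \<open>For n = (e - 1)(e + d), a factorization of length e - 1 + a has weight w with
  e a = d (e - 1 - w); coprimality makes e divide e - 1 - w, hence a = 0.\<close>

lemma arith_factorizations_length_le:
  assumes "e > 0" "d > 0" "coprime e d"
    and "c \<in> arith_factorizations e d t ((e - 1) * (e + d))"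
  shows "sum_list c \<le> e - 1"
proof (rule ccontr)
  assume "\<not> sum_list c \<le> e - 1"
  then obtain a where a: "sum_list c = e - 1 + a" "a > 0"
    by (metis less_imp_add_positive not_le)
  have "e * (e - 1) + e * a + d * list_weight c = e * (e - 1) + d * (e - 1)"
    using assms(4) a(1)
    by (simp add: arith_factorizations_def distrib_left distrib_right mult.commute)
  then have eq: "e * a + d * list_weight c = d * (e - 1)"
    by simp
  then have "list_weight c \<le> e - 1"
    using assms(2) by (metis le_add2 mult_le_cancel1)
  define x where "x = e - 1 - list_weight c"
  have ex: "e * a = d * x"
    using eq \<open>list_weight c \<le> e - 1\<close> by (simp add: x_def diff_mult_distrib2)
  then have "x > 0"
    using a(2) assms(1) by (metis mult_is_0 not_gr0)
  have "e dvd d * x"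
    using ex by (metis dvd_triv_left)
  then have "e dvd x"
    using assms(3) by (simp add: coprime_dvd_mult_right_iff)
  then have "e \<le> x"
    using \<open>x > 0\<close> by (simp add: dvd_imp_le)
  then show False
    using assms(1) by (simp add: x_def)
qed

lemma max_length_arith_factorizations_at:
  assumes "e > 0" "d > 0" "t > 0" "coprime e d"
  defines "F \<equiv> arith_factorizations e d t ((e - 1) * (e + d))"
  shows "F \<noteq> {}"
    and "card {c \<in> F. sum_list c = Max (sum_list ` F)} = card (bounded_partitions t (e - 1))"
proof -
  obtain c where c: "length c = Suc t" "sum_list c = e - 1" "list_weight c = e - 1"
    using exists_list_with_sum_and_weight[of "e - 1" t "e - 1"] assms(3) by auto
  have cF: "c \<in> F"
    using c by (simp add: F_def arith_factorizations_def distrib_left distrib_right mult.commute)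
  then show "F \<noteq> {}"
    by auto
  have fin: "finite F"
    unfolding F_def using assms(1) by (rule finite_arith_factorizations)
  have "Max (sum_list ` F) = e - 1"
  proof (rule antisym)
    show "Max (sum_list ` F) \<le> e - 1"
      using fin cF arith_factorizations_length_le[OF assms(1,2,4)]
      by (intro Max.boundedI) (auto simp: F_def)
    show "e - 1 \<le> Max (sum_list ` F)"
      using fin cF c(2) by (metis Max_ge finite_imageI image_eqI)
  qed
  then have "card {c' \<in> F. sum_list c' = Max (sum_list ` F)} =
      card {mu \<in> bounded_partitions t (e - 1). (\<Sum>i\<in>{1..t}. mu i) \<le> e - 1}"
    using arith_factorizations_of_length[OF assms(2) cF[unfolded F_def]] c
    by (simp add: F_def card_lists_with_sum_and_weight)
  also have "{mu \<in> bounded_partitions t (e - 1). (\<Sum>i\<in>{1..t}. mu i) \<le> e - 1} =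
      bounded_partitions t (e - 1)"
    by (auto dest: bounded_partitions_num_parts_le)
  finally show "card {c \<in> F. sum_list c = Max (sum_list ` F)} = card (bounded_partitions t (e - 1))" .
qed

subsection \<open>The semigroup generated by an arithmetic progression\<close>

lemma gens_arith_progression:
  assumes "d > 0" and "minimal_generators S = (\<lambda>i. e + i * d) ` {0..t}"
  shows "gens S = map (\<lambda>i. e + i * d) [0..<Suc t]"
proof -
  let ?g = "\<lambda>i. e + i * d"
  have "sorted_wrt (<) (map ?g [0..<Suc t])"
    using assms(1) by (auto simp: sorted_wrt_map sorted_wrt_iff_nth_less simp del: upt_Suc)
  moreover have "inj_on ?g {0..t}"
    using assms(1) by (auto simp: inj_on_def)
  ultimately show ?thesis
    unfolding gens_def assms(2)
    by (intro sorted_list_of_set_unique[THEN iffD1])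
      (auto simp: card_image atLeast0AtMost lessThan_Suc_atMost[symmetric] simp del: upt_Suc)
qed

lemma factorizations_arith_progression:
  assumes "gens S = map (\<lambda>i. e + i * d) [0..<Suc t]"
  shows "factorizations n S = arith_factorizations e d t n"
proof -
  have "(\<Sum>i<length (gens S). c ! i * gens S ! i) = (\<Sum>i<Suc t. c ! i * (e + i * d))" for c
    unfolding assms by (intro sum.cong) (auto simp del: upt_Suc)
  then show ?thesis
    unfolding factorizations_def arith_factorizations_def
    using sum_arith_progression_combination[of _ t e d] by (auto simp: assms simp del: upt_Suc)
qed

lemma monoid_gen_arith_progression:
  assumes "d > 0"
  shows "n \<in> monoid_gen ((\<lambda>i. e + i * d) ` {0..t}) \<longleftrightarrow> arith_factorizations e d t n \<noteq> {}"
proof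
  let ?g = "\<lambda>i. e + i * d"
  have inj: "inj_on ?g {0..t}"
    using assms by (auto simp: inj_on_def)
  have combination: "(\<Sum>a\<in>?g ` {0..t}. f a * a) = (\<Sum>i<Suc t. f (?g i) * ?g i)" for f
    unfolding sum.reindex[OF inj] by (simp add: atLeast0AtMost lessThan_Suc_atMost)
  show "arith_factorizations e d t n \<noteq> {}" if n: "n \<in> monoid_gen (?g ` {0..t})"
  proof -
    obtain f where f: "n = (\<Sum>a\<in>?g ` {0..t}. f a * a)"
      using n unfolding monoid_gen_def by blast
    define c where "c = map (f \<circ> ?g) [0..<Suc t]"
    have "(\<Sum>a\<in>?g ` {0..t}. f a * a) = (\<Sum>i<Suc t. c ! i * ?g i)"
      unfolding combination c_def by (intro sum.cong) (auto simp del: upt_Suc)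
    also have "\<dots> = e * sum_list c + d * list_weight c"
      by (rule sum_arith_progression_combination) (simp add: c_def)
    finally have "c \<in> arith_factorizations e d t n"
      using f by (simp add: arith_factorizations_def c_def)
    then show ?thesis
      by auto
  qed
  show "n \<in> monoid_gen (?g ` {0..t})" if nonempty: "arith_factorizations e d t n \<noteq> {}"
  proof -
    obtain c where c: "length c = Suc t" "e * sum_list c + d * list_weight c = n"
      using nonempty by (auto simp: arith_factorizations_def)
    define f where "f a = c ! ((a - e) div d)" for a
    have "(\<Sum>a\<in>?g ` {0..t}. f a * a) = (\<Sum>i<Suc t. c ! i * ?g i)"
      unfolding combination using assms by (intro sum.cong) (auto simp: f_def)
    also have "\<dots> = n"
      using sum_arith_progression_combination[OF c(1)] c(2) by simp
    finally show ?thesis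
      unfolding monoid_gen_def by auto
  qed
qed

theorem proposition4p14:
  fixes e d t :: nat and S :: "nat set"
  assumes "e > 0" and "d > 0" and "t > 0"
    and "gcd e d = 1"
    and "S = monoid_gen ((\<lambda>i. e + i * d) ` {0..t})"
    and "numerical_semigroup S"
    and "minimal_generators S = (\<lambda>i. e + i * d) ` {0..t}"
  shows "dmax S = num_partitions_bounded (e - 1) t"
proof -
  let ?F = "arith_factorizations e d t" and ?p = "card (bounded_partitions t (e - 1))"
  let ?D = "{dmax_elem n S | n. n \<in> S}"
  have dmax_elem: "dmax_elem n S = card {c \<in> ?F n. sum_list c = Max (sum_list ` ?F n)}" for n
    using factorizations_arith_progression[OF gens_arith_progression[OF assms(2,7)]]
    by (simp add: dmax_elem_def ord_S_def fact_len_def[abs_def])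
  have S: "n \<in> S \<longleftrightarrow> ?F n \<noteq> {}" for n
    unfolding assms(5) using assms(2) by (rule monoid_gen_arith_progression)
  have upper: "x \<le> ?p" if "x \<in> ?D" for x
    using that card_max_length_arith_factorizations_le[OF assms(1-3)] by (auto simp: S dmax_elem)
  have "coprime e d"
    using assms(4) by (simp add: coprime_iff_gcd_eq_1)
  then have "(e - 1) * (e + d) \<in> S" and "dmax_elem ((e - 1) * (e + d)) S = ?p"
    using max_length_arith_factorizations_at[OF assms(1-3)] by (simp_all add: S dmax_elem)
  then have "?p \<in> ?D"
    by (metis (mono_tags, lifting) mem_Collect_eq)
  moreover have "finite ?D"
    using upper by (meson atMost_iff finite_atMost finite_subset subsetI)
  ultimately have "Max ?D = ?p"
    using upper by (intro Max_eqI) auto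
  then show ?thesis
    by (simp add: dmax_def num_partitions_bounded_def bounded_partitions_def)
qed

end
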